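(* Let $\alpha\geqslant2$, $\mathbb{D}\in\{\mathbb{R}^2,\mathbb{R}\times\mathbb{T}\}$, $N_1,N_2,N_3\in2^{\mathbb{Z}}$ with $N_3\sim N_1\gtrsim N_2$, $L_1,L_2,L_3\in2^{\mathbb{N}_0}$ with $L_i\ll N_1^\alpha N_2$ for $i=1,2,3$, and let $f_{i,N_i,L_i}:\mathbb{R}\times\mathbb{D}^*\to\mathbb{C}$ with $\mathrm{supp}(f_{i,N_i,L_i})\subseteq D_{N_i,L_i}$, $i=1,2$. Then, with $N_{\min}=\min(N_1,N_2)$, $N_{\max}=\max(N_1,N_2)$, $$\|1_{D_{\alpha,N_3,L_3}}(f_{1,N_1,L_1}*f_{2,N_2,L_2})\|_{L^2_{\tau,\xi,\eta}(\mathbb{R}\times\mathbb{D}^* )}\lesssim(L_1\wedge L_2)^{\frac12}N_{\min}^{\frac12}C_{1,\mathbb{D}}(L_1\vee L_2,N_{\max})\prod_{i=1}^2\|f_{i,N_i,L_i}\|_{L^2_{\tau,\xi,\eta}(\mathbb{R}\times\mathbb{D}^* )}.$$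
   Context: $\mathbb{D}^*=\mathbb{R}^2$ or $\mathbb{R}\times\mathbb{Z}$ (counting measure in $\eta$). $\omega_\alpha(\xi,\eta)=\xi|\xi|^\alpha+\frac{\eta^2}{\xi}$. For $N\in2^{\mathbb{Z}}$, $A_N=\{\xi:N/4\leqslant|\xi|\leqslant4N\}$ and $D_{N,L}=D_{\alpha,N,L}=\{(\tau,\xi,\eta)\in\mathbb{R}\times\mathbb{D}^*:\xi\in A_N,\ |\tau-\omega_\alpha(\xi,\eta)|\leqslant L\}$. $C_{1,\mathbb{R}^2}(L,N)=(L/N^{\alpha/2})^{1/2}$, $C_{1,\mathbb{R}\times\mathbb{T}}(L,N)=\langle L/N^{\alpha/2}\rangle^{1/2}$. $a\wedge b=\min$, $a\vee b=\max$; $\ll$ means smaller than a sufficiently small absolute constant times. *)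

theory Defs
  imports "HOL-Analysis.Analysis"
begin

text \<open>Flag torus = False: D* = R^2 (Lebesgue in eta);
  torus = True: D* = R \<times> Z (counting measure on eta \<in> Z).\<close>

definition eta_measure :: "bool \<Rightarrow> real measure" where
  "eta_measure torus = (if torus then count_space \<int> else lborel)"

definition freq_measure :: "bool \<Rightarrow> (real \<times> real \<times> real) measure" where
  "freq_measure torus = lborel \<Otimes>\<^sub>M (lborel \<Otimes>\<^sub>M eta_measure torus)"

definition omega :: "real \<Rightarrow> real \<Rightarrow> real \<Rightarrow> real" where
  "omega \<alpha> \<xi> \<eta> = \<xi> * \<bar>\<xi>\<bar> powr \<alpha> + \<eta>\<^sup>2 / \<xi>"

definition annulus :: "real \<Rightarrow> real set" where
  "annulus N = {\<xi>. N / 4 \<le> \<bar>\<xi>\<bar> \<and> \<bar>\<xi>\<bar> \<le> 4 * N}"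

definition Dset :: "bool \<Rightarrow> real \<Rightarrow> real \<Rightarrow> real \<Rightarrow> (real \<times> real \<times> real) set" where
  "Dset torus \<alpha> N L = {(\<tau>, \<xi>, \<eta>). (torus \<longrightarrow> \<eta> \<in> \<int>) \<and> \<xi> \<in> annulus N \<and>
      \<bar>\<tau> - omega \<alpha> \<xi> \<eta>\<bar> \<le> L}"

definition conv :: "bool \<Rightarrow> (real \<times> real \<times> real \<Rightarrow> complex) \<Rightarrow> (real \<times> real \<times> real \<Rightarrow> complex)
    \<Rightarrow> real \<times> real \<times> real \<Rightarrow> complex" where
  "conv torus f g x = (\<integral>y. f y * g (x - y) \<partial>freq_measure torus)"

definition L2norm :: "bool \<Rightarrow> (real \<times> real \<times> real \<Rightarrow> complex) \<Rightarrow> ennreal" where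
  "L2norm torus f = (let I = (\<integral>\<^sup>+x. ennreal ((cmod (f x))\<^sup>2) \<partial>freq_measure torus)
     in if I = \<infinity> then \<infinity> else ennreal (sqrt (enn2real I)))"

definition japanese :: "real \<Rightarrow> real" where
  "japanese x = sqrt (1 + x\<^sup>2)"

definition C1 :: "bool \<Rightarrow> real \<Rightarrow> real \<Rightarrow> real \<Rightarrow> real" where
  "C1 torus \<alpha> L N = (if torus then sqrt (japanese (L / N powr (\<alpha> / 2)))
                      else sqrt (L / N powr (\<alpha> / 2)))"

definition dyadic_int :: "real \<Rightarrow> bool" where
  "dyadic_int N \<longleftrightarrow> (\<exists>k::int. N = 2 powr (real_of_int k))"

definition dyadic_nat :: "real \<Rightarrow> bool" where
  "dyadic_nat L \<longleftrightarrow> (\<exists>k::nat. L = 2 ^ k)"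

end

theory Submission
  imports Defs
begin

text \<open>
  For \<open>x = (\<tau>, \<xi>, \<eta>) \<in> D\<^sub>N\<^sub>3\<^sub>,\<^sub>L\<^sub>3\<close>, Cauchy--Schwarz bounds \<open>\<bar>(f\<^sub>1 * f\<^sub>2)(x)\<bar>\<^sup>2\<close> by the measure of the
  fibre \<open>{y. y \<in> D\<^sub>N\<^sub>1\<^sub>,\<^sub>L\<^sub>1, x - y \<in> D\<^sub>N\<^sub>2\<^sub>,\<^sub>L\<^sub>2}\<close> times \<open>\<integral> \<bar>f\<^sub>1 y\<bar>\<^sup>2 \<bar>f\<^sub>2 (x - y)\<bar>\<^sup>2 dy\<close>, so everything
  reduces to bounding the fibre. Integrating in \<open>\<tau>\<close> costs \<open>min L\<^sub>1 L\<^sub>2\<close> and in \<open>\<xi>\<^sub>1\<close> costs \<open>min N\<^sub>1 N\<^sub>2\<close>.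
  In \<open>\<eta>\<^sub>1\<close> one uses the resonance: \<open>\<Phi>(\<xi>\<^sub>1, \<xi>\<^sub>2) = \<xi>\<^sub>1\<bar>\<xi>\<^sub>1\<bar>\<^sup>\<alpha> + \<xi>\<^sub>2\<bar>\<xi>\<^sub>2\<bar>\<^sup>\<alpha> - (\<xi>\<^sub>1 + \<xi>\<^sub>2)\<bar>\<xi>\<^sub>1 + \<xi>\<^sub>2\<bar>\<^sup>\<alpha>\<close>
  has size \<open>\<gtrsim> N\<^sub>1\<^sup>\<alpha> N\<^sub>2\<close> while all modulations are \<open>\<lless> N\<^sub>1\<^sup>\<alpha> N\<^sub>2\<close>, so the quadratic part
  \<open>(\<eta>\<^sub>1\<xi>\<^sub>2 - \<eta>\<^sub>2\<xi>\<^sub>1)\<^sup>2 / (\<xi>\<^sub>1\<xi>\<^sub>2(\<xi>\<^sub>1 + \<xi>\<^sub>2))\<close> of the phase is just as large. This makes the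
  \<open>\<eta>\<^sub>1\<close>-derivative \<open>2\<eta>\<^sub>1/\<xi>\<^sub>1 - 2\<eta>\<^sub>2/\<xi>\<^sub>2\<close> of the phase at least \<open>\<kappa> N\<^sub>1\<^sup>\<alpha>\<^sup>/\<^sup>2\<close> on the fibre, so the
  fibre meets each line \<open>\<xi>\<^sub>1 = const\<close> in two intervals of length \<open>\<lesssim> max L\<^sub>1 L\<^sub>2 / N\<^sub>1\<^sup>\<alpha>\<^sup>/\<^sup>2\<close>.
  Their Lebesgue measure, or their number of integer points, is \<open>\<lesssim> C\<^sub>1\<^sup>2\<close>.
\<close>

section \<open>Resonance and transversality\<close>

definition signed_powr :: "real \<Rightarrow> real \<Rightarrow> real" where
  "signed_powr \<alpha> x = x * \<bar>x\<bar> powr \<alpha>"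

lemma signed_powr_minus [simp]: "signed_powr \<alpha> (- x) = - signed_powr \<alpha> x"
  by (simp add: signed_powr_def)

lemma omega_eq_signed_powr: "omega \<alpha> \<xi> \<eta> = signed_powr \<alpha> \<xi> + \<eta>\<^sup>2 / \<xi>"
  by (simp add: omega_def signed_powr_def)

lemma add_powr_le_powr_add:
  fixes u v \<alpha> :: real
  assumes "\<alpha> \<ge> 1" "u \<ge> 0" "v \<ge> 0"
  shows "u powr \<alpha> + v powr \<alpha> \<le> (u + v) powr \<alpha>"
proof -
  have split: "x powr \<alpha> = x * x powr (\<alpha> - 1)" if "x \<ge> 0" for x :: real
    using that assms(1) by (cases "x = 0") (simp_all add: powr_mult_base)
  have "u * u powr (\<alpha> - 1) + v * v powr (\<alpha> - 1) \<le> u * (u + v) powr (\<alpha> - 1) + v * (u + v) powr (\<alpha> - 1)"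
    using assms by (intro add_mono mult_left_mono powr_mono2) auto
  then show ?thesis
    using assms by (simp add: split distrib_right[symmetric])
qed

lemma signed_powr_add_diff_ge:
  fixes u v \<alpha> :: real
  assumes "\<alpha> \<ge> 1" "u > 0" "v > 0"
  shows "u powr \<alpha> * v + v powr \<alpha> * u \<le> signed_powr \<alpha> (u + v) - signed_powr \<alpha> u - signed_powr \<alpha> v"
proof -
  have "(u + v) * (u powr \<alpha> + v powr \<alpha>) \<le> (u + v) * (u + v) powr \<alpha>"
    using add_powr_le_powr_add[of \<alpha> u v] assms by (intro mult_left_mono) auto
  then show ?thesis
    using assms by (simp add: signed_powr_def algebra_simps)
qed

text \<open>The resonance function is odd, so it suffices to treat \<open>a + b > 0\<close>; then one of \<open>\<bar>a\<bar>\<close>,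
  \<open>\<bar>b\<bar>\<close>, \<open>\<bar>a + b\<bar>\<close> is the sum of the other two.\<close>
lemma resonance_lower_bound:
  fixes \<alpha> a b m n :: real
  assumes "\<alpha> \<ge> 1" "m \<ge> 0" "m \<le> \<bar>a\<bar>" "m \<le> \<bar>a + b\<bar>"
    and "n > 0" "n \<le> \<bar>a\<bar>" "n \<le> \<bar>b\<bar>" "n \<le> \<bar>a + b\<bar>"
  shows "m powr \<alpha> * n \<le> \<bar>signed_powr \<alpha> a + signed_powr \<alpha> b - signed_powr \<alpha> (a + b)\<bar>"
proof -
  have mono: "m powr \<alpha> * n \<le> x powr \<alpha> * y" if "m \<le> x" "n \<le> y" for x y
    using that assms by (intro mult_mono powr_mono2) auto
  have nonneg: "0 \<le> x powr \<alpha> * y" if "y > 0" for x y :: real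
    using that by simp
  have pos: "m powr \<alpha> * n \<le> \<bar>signed_powr \<alpha> a + signed_powr \<alpha> b - signed_powr \<alpha> (a + b)\<bar>"
    if "a + b > 0" "m \<le> \<bar>a\<bar>" "m \<le> \<bar>a + b\<bar>" "n \<le> \<bar>a\<bar>" "n \<le> \<bar>b\<bar>" "n \<le> \<bar>a + b\<bar>" for a b
  proof -
    have "a \<noteq> 0" "b \<noteq> 0" using that assms(5) by auto
    then consider "a > 0" "b > 0" | "a > 0" "b < 0" | "a < 0" "b > 0"
      using \<open>a + b > 0\<close> by linarith
    then show ?thesis
    proof cases
      case 1
      then show ?thesis
        using signed_powr_add_diff_ge[of \<alpha> a b] mono[of a b] that assms(1)
        by (smt (verit) nonneg)
    next
      case 2
      have "a = (- b) + (a + b)" by simp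
      then show ?thesis
        using signed_powr_add_diff_ge[of \<alpha> "- b" "a + b"] mono[of "a + b" "- b"] 2 that assms(1)
        by (smt (verit) signed_powr_minus nonneg)
    next
      case 3
      have "b = (- a) + (a + b)" by simp
      then show ?thesis
        using signed_powr_add_diff_ge[of \<alpha> "- a" "a + b"] mono[of "- a" "a + b"] 3 that assms(1)
        by (smt (verit) signed_powr_minus nonneg)
    qed
  qed
  have "a + b \<noteq> 0" using assms by linarith
  then consider "a + b > 0" | "(- a) + (- b) > 0" by linarith
  then show ?thesis
  proof cases
    case 1
    then show ?thesis using pos assms by blast
  next
    case 2
    have "signed_powr \<alpha> (- a + - b) = - signed_powr \<alpha> (a + b)"
      by (metis minus_add_distrib signed_powr_minus)
    then show ?thesis
      using pos[of "- a" "- b"] 2 assms by (smt (verit) signed_powr_minus)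
  qed
qed

definition resonance_const :: "real \<Rightarrow> real \<Rightarrow> real" where
  "resonance_const K \<alpha> = (1 / (4 * K)) powr \<alpha> / (4 * K\<^sup>2)"

lemma resonance_const_pos: "K \<ge> 1 \<Longrightarrow> resonance_const K \<alpha> > 0"
  by (simp add: resonance_const_def)

lemma resonance_lower_bound_annulus:
  fixes \<alpha> K N1 N2 N3 a b :: real
  assumes "\<alpha> \<ge> 1" "K \<ge> 1" "N1 > 0" "N2 > 0" "N1 \<le> K * N3" "N2 \<le> K * N1"
    and "a \<in> annulus N1" "b \<in> annulus N2" "a + b \<in> annulus N3"
  shows "resonance_const K \<alpha> * N1 powr \<alpha> * N2
    \<le> \<bar>signed_powr \<alpha> a + signed_powr \<alpha> b - signed_powr \<alpha> (a + b)\<bar>"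
proof -
  have "N1 / K \<le> N1" "N2 / K \<le> N2" "N2 / K\<^sup>2 \<le> N1 / K"
    using assms(2-6) by (auto simp: field_simps power2_eq_square)
  moreover have "N2 / K\<^sup>2 \<le> N2"
    using assms(2,4) by (simp add: field_simps)
  moreover have "N1 / K \<le> N3" using assms(2,5) by (simp add: field_simps)
  ultimately have "(N1 / (4 * K)) powr \<alpha> * (N2 / (4 * K\<^sup>2))
      \<le> \<bar>signed_powr \<alpha> a + signed_powr \<alpha> b - signed_powr \<alpha> (a + b)\<bar>"
    using assms by (intro resonance_lower_bound) (auto simp: annulus_def)
  moreover have "(N1 / (4 * K)) powr \<alpha> * (N2 / (4 * K\<^sup>2)) = resonance_const K \<alpha> * N1 powr \<alpha> * N2"
    using assms(2,3) by (simp add: resonance_const_def powr_divide)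
  ultimately show ?thesis by simp
qed

lemma omega_sum_identity:
  fixes \<xi>1 \<xi>2 \<eta>1 \<eta>2 :: real
  assumes "\<xi>1 \<noteq> 0" "\<xi>2 \<noteq> 0" "\<xi>1 + \<xi>2 \<noteq> 0"
  shows "(2 * \<eta>1 / \<xi>1 - 2 * \<eta>2 / \<xi>2)\<^sup>2 * (\<xi>1 * \<xi>2)
    = 4 * (\<xi>1 + \<xi>2) * (omega \<alpha> \<xi>1 \<eta>1 + omega \<alpha> \<xi>2 \<eta>2 - omega \<alpha> (\<xi>1 + \<xi>2) (\<eta>1 + \<eta>2)
      - (signed_powr \<alpha> \<xi>1 + signed_powr \<alpha> \<xi>2 - signed_powr \<alpha> (\<xi>1 + \<xi>2)))"
proof -
  define w where "w = \<eta>1 * \<xi>2 - \<eta>2 * \<xi>1"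
  have "2 * \<eta>1 / \<xi>1 - 2 * \<eta>2 / \<xi>2 = 2 * w / (\<xi>1 * \<xi>2)"
    using assms by (simp add: w_def field_simps)
  then have "(2 * \<eta>1 / \<xi>1 - 2 * \<eta>2 / \<xi>2)\<^sup>2 * (\<xi>1 * \<xi>2)
      = 4 * (\<xi>1 + \<xi>2) * (w\<^sup>2 / (\<xi>1 * \<xi>2 * (\<xi>1 + \<xi>2)))"
    using assms by (simp add: divide_simps power2_eq_square mult_ac)
  also have "w\<^sup>2 / (\<xi>1 * \<xi>2 * (\<xi>1 + \<xi>2)) = \<eta>1\<^sup>2 / \<xi>1 + \<eta>2\<^sup>2 / \<xi>2 - (\<eta>1 + \<eta>2)\<^sup>2 / (\<xi>1 + \<xi>2)"
    using assms by (simp add: w_def field_simps power2_eq_square)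
  also have "\<dots> = omega \<alpha> \<xi>1 \<eta>1 + omega \<alpha> \<xi>2 \<eta>2 - omega \<alpha> (\<xi>1 + \<xi>2) (\<eta>1 + \<eta>2)
      - (signed_powr \<alpha> \<xi>1 + signed_powr \<alpha> \<xi>2 - signed_powr \<alpha> (\<xi>1 + \<xi>2))"
    by (simp add: omega_eq_signed_powr)
  finally show ?thesis .
qed

definition transversality_const :: "real \<Rightarrow> real \<Rightarrow> real" where
  "transversality_const K \<alpha> = sqrt (resonance_const K \<alpha> / (32 * K))"

lemma transversality_const_pos: "K \<ge> 1 \<Longrightarrow> transversality_const K \<alpha> > 0"
  using resonance_const_pos[of K \<alpha>] by (simp add: transversality_const_def)

lemma transversality_lower_bound:
  fixes \<alpha> K N1 N2 N3 \<xi>1 \<xi>2 \<eta>1 \<eta>2 :: real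
  assumes "\<alpha> \<ge> 1" "K \<ge> 1" "N1 > 0" "N2 > 0" "N3 > 0" "N1 \<le> K * N3" "N2 \<le> K * N1"
    and "\<xi>1 \<in> annulus N1" "\<xi>2 \<in> annulus N2" "\<xi>1 + \<xi>2 \<in> annulus N3"
    and "\<bar>omega \<alpha> \<xi>1 \<eta>1 + omega \<alpha> \<xi>2 \<eta>2 - omega \<alpha> (\<xi>1 + \<xi>2) (\<eta>1 + \<eta>2)\<bar>
      \<le> resonance_const K \<alpha> / 2 * N1 powr \<alpha> * N2"
  shows "transversality_const K \<alpha> * N1 powr (\<alpha> / 2) \<le> \<bar>2 * \<eta>1 / \<xi>1 - 2 * \<eta>2 / \<xi>2\<bar>"
proof -
  define c where "c = resonance_const K \<alpha>"
  define S where "S = 2 * \<eta>1 / \<xi>1 - 2 * \<eta>2 / \<xi>2"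
  define \<Psi> where "\<Psi> = omega \<alpha> \<xi>1 \<eta>1 + omega \<alpha> \<xi>2 \<eta>2 - omega \<alpha> (\<xi>1 + \<xi>2) (\<eta>1 + \<eta>2)
    - (signed_powr \<alpha> \<xi>1 + signed_powr \<alpha> \<xi>2 - signed_powr \<alpha> (\<xi>1 + \<xi>2))"
  have c: "c > 0" using assms(2) by (simp add: c_def resonance_const_pos)
  have \<xi>: "N1 / 4 \<le> \<bar>\<xi>1\<bar>" "\<bar>\<xi>1\<bar> \<le> 4 * N1" "N2 / 4 \<le> \<bar>\<xi>2\<bar>" "\<bar>\<xi>2\<bar> \<le> 4 * N2"
      "N3 / 4 \<le> \<bar>\<xi>1 + \<xi>2\<bar>"
    using assms(8-10) by (auto simp: annulus_def)
  have "c * N1 powr \<alpha> * N2 \<le> \<bar>signed_powr \<alpha> \<xi>1 + signed_powr \<alpha> \<xi>2 - signed_powr \<alpha> (\<xi>1 + \<xi>2)\<bar>"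
    unfolding c_def using assms(1-4,6-10) by (rule resonance_lower_bound_annulus)
  then have \<Psi>: "c / 2 * N1 powr \<alpha> * N2 \<le> \<bar>\<Psi>\<bar>"
    using assms(11) unfolding \<Psi>_def c_def by linarith
  have "c / (32 * K) * N1 powr \<alpha> * (16 * N1 * N2) = 4 * (N1 / (4 * K)) * (c / 2 * N1 powr \<alpha> * N2)"
    using assms(2) by (simp add: field_simps)
  also have "\<dots> \<le> 4 * \<bar>\<xi>1 + \<xi>2\<bar> * \<bar>\<Psi>\<bar>"
  proof -
    have "N1 / (4 * K) \<le> N3 / 4"
      using assms(2,6) by (simp add: field_simps)
    then have "N1 / (4 * K) \<le> \<bar>\<xi>1 + \<xi>2\<bar>"
      using \<xi>(5) by linarith
    then show ?thesis
      using \<Psi> c assms(2-4) by (intro mult_mono mult_left_mono) auto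
  qed
  also have "\<dots> = S\<^sup>2 * \<bar>\<xi>1 * \<xi>2\<bar>"
  proof -
    have "\<xi>1 \<noteq> 0" "\<xi>2 \<noteq> 0" "\<xi>1 + \<xi>2 \<noteq> 0" using \<xi> assms(3-5) by auto
    from arg_cong[OF omega_sum_identity[OF this, of \<eta>1 \<eta>2 \<alpha>], of abs]
    show ?thesis unfolding S_def \<Psi>_def by (simp only: abs_mult abs_power2 abs_numeral)
  qed
  also have "\<dots> \<le> S\<^sup>2 * (16 * N1 * N2)"
  proof -
    have "\<bar>\<xi>1\<bar> * \<bar>\<xi>2\<bar> \<le> (4 * N1) * (4 * N2)"
      using \<xi> by (intro mult_mono) auto
    then show ?thesis by (simp add: abs_mult mult_left_mono)
  qed
  finally have "c / (32 * K) * N1 powr \<alpha> \<le> S\<^sup>2"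
    by (rule mult_right_le_imp_le) (use assms(3,4) in simp)
  also have "c / (32 * K) * N1 powr \<alpha> = (transversality_const K \<alpha> * N1 powr (\<alpha> / 2))\<^sup>2"
  proof -
    have "(N1 powr (\<alpha> / 2))\<^sup>2 = N1 powr \<alpha>"
      by (simp add: power2_eq_square powr_add[symmetric])
    then show ?thesis
      using c assms(2) by (simp add: transversality_const_def c_def power_mult_distrib)
  qed
  finally show ?thesis
    unfolding S_def by (metis power2_abs power2_le_imp_le abs_ge_zero)
qed

section \<open>Translation invariance and the convolution estimate\<close>

lemma space_eta_measure: "space (eta_measure torus) = (if torus then \<int> else UNIV)"
  by (simp add: eta_measure_def)

lemma space_freq_measure: "space (freq_measure torus) = UNIV \<times> UNIV \<times> space (eta_measure torus)"
  by (simp add: freq_measure_def space_pair_measure)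

lemma Dset_subset_space: "Dset torus \<alpha> N L \<subseteq> space (freq_measure torus)"
  by (auto simp: Dset_def space_freq_measure space_eta_measure)

lemma sigma_finite_eta_measure: "sigma_finite_measure (eta_measure torus)"
  by (cases torus)
    (auto simp: eta_measure_def intro: sigma_finite_measure_count_space_countable countable_int
      lborel.sigma_finite_measure_axioms)

lemma sigma_finite_freq_measure: "sigma_finite_measure (freq_measure torus)"
  unfolding freq_measure_def
  by (intro sigma_finite_pair_measure lborel.sigma_finite_measure_axioms sigma_finite_eta_measure)

lemma measurable_eta_measure_imp_borel:
  assumes "f \<in> measurable M (eta_measure torus)"
  shows "f \<in> borel_measurable M"
proof -
  have "(\<lambda>x. x) \<in> measurable (eta_measure torus) borel"
    by (cases torus) (auto simp: eta_measure_def)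
  from measurable_compose[OF assms this] show ?thesis .
qed

lemma measurable_eta_measure_diff:
  assumes "f \<in> measurable M (eta_measure torus)" "g \<in> measurable M (eta_measure torus)"
  shows "(\<lambda>z. f z - g z) \<in> measurable M (eta_measure torus)"
proof (cases torus)
  case True
  have "(\<lambda>z. (f z, g z)) \<in> measurable M (count_space \<int> \<Otimes>\<^sub>M count_space \<int>)"
    using assms True by (auto simp: eta_measure_def intro!: measurable_Pair)
  moreover have "(\<lambda>(p::real, q). p - q) \<in> measurable (count_space \<int> \<Otimes>\<^sub>M count_space \<int>) (count_space \<int>)"
  proof -
    have "(\<lambda>(p::real, q). p - q) \<in> measurable (count_space (\<int> \<times> \<int>)) (count_space \<int>)"
      by auto
    then show ?thesis by (simp add: pair_measure_countable countable_int)
  qed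
  ultimately show ?thesis
    using True by (simp add: eta_measure_def measurable_compose[where f = "\<lambda>z. (f z, g z)"])
qed (use assms in \<open>simp add: eta_measure_def\<close>)

lemma measurable_freq_components [measurable]:
  "fst \<in> borel_measurable (freq_measure torus)"
  "(\<lambda>y. fst (snd y)) \<in> borel_measurable (freq_measure torus)"
  "(\<lambda>y. snd (snd y)) \<in> borel_measurable (freq_measure torus)"
  unfolding freq_measure_def
  by (auto intro: measurable_eta_measure_imp_borel measurable_compose[OF measurable_snd measurable_snd]
      measurable_compose[OF measurable_snd measurable_fst])

lemma borel_measurable_omega [measurable]:
  assumes [measurable]: "f \<in> borel_measurable M" "g \<in> borel_measurable M"
  shows "(\<lambda>y. omega \<alpha> (f y) (g y)) \<in> borel_measurable M"
  unfolding omega_def by measurable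

lemma measurable_freq_measure_diff:
  assumes "f \<in> measurable M (freq_measure torus)" "g \<in> measurable M (freq_measure torus)"
  shows "(\<lambda>z. f z - g z) \<in> measurable M (freq_measure torus)"
proof -
  have "(\<lambda>z. f z - g z) = (\<lambda>z. (fst (f z) - fst (g z), fst (snd (f z)) - fst (snd (g z)),
      snd (snd (f z)) - snd (snd (g z))))"
    by (auto simp: fun_eq_iff prod_eq_iff)
  moreover have "(\<lambda>z. snd (snd (f z)) - snd (snd (g z))) \<in> measurable M (eta_measure torus)"
    using assms by (intro measurable_eta_measure_diff) (auto simp: freq_measure_def measurable_pair_iff o_def)
  moreover have "(\<lambda>z. fst (f z)) \<in> borel_measurable M" "(\<lambda>z. fst (g z)) \<in> borel_measurable M"
    "(\<lambda>z. fst (snd (f z))) \<in> borel_measurable M" "(\<lambda>z. fst (snd (g z))) \<in> borel_measurable M"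
    using assms by (auto simp: freq_measure_def measurable_pair_iff o_def)
  ultimately show ?thesis
    unfolding freq_measure_def by (auto intro!: measurable_Pair)
qed

lemma distr_eta_measure_translation:
  assumes "c \<in> space (eta_measure torus)"
  shows "distr (eta_measure torus) (eta_measure torus) (\<lambda>t. t - c) = eta_measure torus"
proof (cases torus)
  case True
  have "bij_betw (\<lambda>t. t - c) \<int> \<int>"
    by (rule bij_betwI[where g = "\<lambda>t. t + c"]) (use assms True in \<open>auto simp: eta_measure_def\<close>)
  then show ?thesis using True by (simp add: eta_measure_def distr_bij_count_space)
next
  case False
  have "distr lborel lborel (\<lambda>t::real. t - c) = distr lborel borel ((+) (- c))"
    by (rule distr_cong) auto
  then show ?thesis using False by (simp add: eta_measure_def lborel_distr_plus)
qed

lemma distr_freq_measure_translation: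
  assumes "y \<in> space (freq_measure torus)"
  shows "distr (freq_measure torus) (freq_measure torus) (\<lambda>x. x - y) = freq_measure torus"
proof -
  obtain a b c where y: "y = (a, b, c)" by (cases y)
  have c: "c \<in> space (eta_measure torus)" using assms y by (simp add: space_freq_measure)
  have lborel: "distr lborel lborel (\<lambda>t::real. t - s) = lborel" for s
    using distr_eta_measure_translation[of s False] by (simp add: eta_measure_def)
  let ?\<eta> = "eta_measure torus"
  have "(\<lambda>t. t - c) \<in> measurable ?\<eta> ?\<eta>"
    by (rule measurable_eta_measure_diff) (auto intro: measurable_const c)
  then have inner: "distr (lborel \<Otimes>\<^sub>M ?\<eta>) (lborel \<Otimes>\<^sub>M ?\<eta>) (\<lambda>(x, z). (x - b, z - c)) = lborel \<Otimes>\<^sub>M ?\<eta>"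
    and inner_meas: "(\<lambda>(x, z). (x - b, z - c)) \<in> measurable (lborel \<Otimes>\<^sub>M ?\<eta>) (lborel \<Otimes>\<^sub>M ?\<eta>)"
    using pair_measure_distr[of "\<lambda>x. x - b" lborel lborel "\<lambda>z. z - c" ?\<eta> ?\<eta>]
      distr_eta_measure_translation[OF c] sigma_finite_eta_measure lborel[of b] by auto
  have "distr (freq_measure torus) (freq_measure torus) (\<lambda>(t, w). (t - a, (\<lambda>(x, z). (x - b, z - c)) w))
      = freq_measure torus"
    using pair_measure_distr[OF _ inner_meas, of "\<lambda>t. t - a" lborel lborel] inner lborel[of a]
      sigma_finite_eta_measure
    by (simp add: freq_measure_def sigma_finite_pair_measure lborel.sigma_finite_measure_axioms)
  moreover have "distr (freq_measure torus) (freq_measure torus) (\<lambda>x. x - y)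
      = distr (freq_measure torus) (freq_measure torus) (\<lambda>(t, w). (t - a, (\<lambda>(x, z). (x - b, z - c)) w))"
    by (rule distr_cong) (auto simp: y)
  ultimately show ?thesis by simp
qed

lemma nn_integral_freq_measure_translation:
  assumes "y \<in> space (freq_measure torus)" "h \<in> borel_measurable (freq_measure torus)"
  shows "(\<integral>\<^sup>+x. h (x - y) \<partial>freq_measure torus) = (\<integral>\<^sup>+x. h x \<partial>freq_measure torus)"
proof -
  have "(\<lambda>x. x - y) \<in> measurable (freq_measure torus) (freq_measure torus)"
    using assms(1) by (intro measurable_freq_measure_diff) auto
  from nn_integral_distr[OF this, of h] show ?thesis
    using assms by (simp add: distr_freq_measure_translation)
qed

lemma norm_conv_le:
  "ennreal (norm (conv torus f g x)) \<le> (\<integral>\<^sup>+y. ennreal (norm (f y * g (x - y))) \<partial>freq_measure torus)"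
proof (cases "integrable (freq_measure torus) (\<lambda>y. f y * g (x - y))")
  case True
  then show ?thesis unfolding conv_def by (rule integral_norm_bound_ennreal)
qed (simp add: conv_def not_integrable_integral_eq)

text \<open>Cauchy--Schwarz in \<open>y\<close> against the indicator of \<open>E x\<close>, then Tonelli and translation
  invariance of the measure.\<close>
lemma nn_integral_indicator_conv_sq_le:
  fixes f g :: "real \<times> real \<times> real \<Rightarrow> complex"
  assumes f: "f \<in> borel_measurable (freq_measure torus)"
    and g: "g \<in> borel_measurable (freq_measure torus)"
    and E_meas: "\<And>x. x \<in> D \<Longrightarrow> (\<lambda>y. indicator (E x) y :: ennreal) \<in> borel_measurable (freq_measure torus)"
    and E_le: "\<And>x. x \<in> D \<Longrightarrow> (\<integral>\<^sup>+y. indicator (E x) y \<partial>freq_measure torus) \<le> C"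
    and E_supp: "\<And>x y. x \<in> D \<Longrightarrow> f y \<noteq> 0 \<Longrightarrow> g (x - y) \<noteq> 0 \<Longrightarrow> y \<in> E x"
  shows "(\<integral>\<^sup>+x. ennreal ((cmod (indicator D x * conv torus f g x))\<^sup>2) \<partial>freq_measure torus)
    \<le> C * (\<integral>\<^sup>+x. ennreal ((cmod (f x))\<^sup>2) \<partial>freq_measure torus)
        * (\<integral>\<^sup>+x. ennreal ((cmod (g x))\<^sup>2) \<partial>freq_measure torus)"
proof -
  let ?M = "freq_measure torus"
  define F where "F = (\<lambda>(x, y). ennreal ((cmod (f y))\<^sup>2 * (cmod (g (x - y)))\<^sup>2))"
  have "(\<lambda>p. fst p - snd p) \<in> measurable (?M \<Otimes>\<^sub>M ?M) ?M"
    by (rule measurable_freq_measure_diff) auto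
  then have "(\<lambda>p. g (fst p - snd p)) \<in> borel_measurable (?M \<Otimes>\<^sub>M ?M)"
    using measurable_compose[OF _ g] by blast
  moreover have "(\<lambda>p. f (snd p)) \<in> borel_measurable (?M \<Otimes>\<^sub>M ?M)"
    using measurable_compose[OF measurable_snd f] by blast
  ultimately have F_meas: "F \<in> borel_measurable (?M \<Otimes>\<^sub>M ?M)"
    by (simp add: F_def case_prod_beta')
  have pointwise: "ennreal ((cmod (indicator D x * conv torus f g x))\<^sup>2) \<le> C * (\<integral>\<^sup>+y. F (x, y) \<partial>?M)"
    if x: "x \<in> space ?M" for x
  proof (cases "x \<in> D")
    case True
    define h where "h = (\<lambda>y. ennreal (norm (f y) * norm (g (x - y))))"
    have "(\<lambda>y. x - y) \<in> measurable ?M ?M"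
      using x by (intro measurable_freq_measure_diff) auto
    then have "(\<lambda>y. g (x - y)) \<in> borel_measurable ?M"
      using measurable_compose[OF _ g] by blast
    then have h_meas: "h \<in> borel_measurable ?M"
      unfolding h_def using f by simp
    have "ennreal ((cmod (indicator D x * conv torus f g x))\<^sup>2) = (ennreal (norm (conv torus f g x)))\<^sup>2"
      using True by (simp add: ennreal_power)
    also have "\<dots> \<le> (\<integral>\<^sup>+y. ennreal (norm (f y * g (x - y))) \<partial>?M)\<^sup>2"
      by (intro power_mono norm_conv_le) simp
    also have "(\<integral>\<^sup>+y. ennreal (norm (f y * g (x - y))) \<partial>?M) = (\<integral>\<^sup>+y. indicator (E x) y * h y \<partial>?M)"
      using E_supp[OF True] by (intro nn_integral_cong) (auto simp: h_def norm_mult split: split_indicator)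
    also have "(\<dots>)\<^sup>2 \<le> (\<integral>\<^sup>+y. (indicator (E x) y)\<^sup>2 \<partial>?M) * (\<integral>\<^sup>+y. (h y)\<^sup>2 \<partial>?M)"
      by (rule Cauchy_Schwarz_nn_integral[OF E_meas[OF True] h_meas])
    also have "(\<integral>\<^sup>+y. (indicator (E x) y)\<^sup>2 \<partial>?M) = (\<integral>\<^sup>+y. indicator (E x) y \<partial>?M)"
      by (intro nn_integral_cong) (simp split: split_indicator)
    also have "\<dots> * (\<integral>\<^sup>+y. (h y)\<^sup>2 \<partial>?M) \<le> C * (\<integral>\<^sup>+y. (h y)\<^sup>2 \<partial>?M)"
      using E_le[OF True] by (rule mult_right_mono) simp
    also have "(\<integral>\<^sup>+y. (h y)\<^sup>2 \<partial>?M) = (\<integral>\<^sup>+y. F (x, y) \<partial>?M)"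
      by (simp add: h_def F_def ennreal_power power_mult_distrib)
    finally show ?thesis .
  qed simp
  interpret pair_sigma_finite ?M ?M
    by (simp add: pair_sigma_finite_def sigma_finite_freq_measure)
  have "(\<integral>\<^sup>+x. ennreal ((cmod (indicator D x * conv torus f g x))\<^sup>2) \<partial>?M)
      \<le> (\<integral>\<^sup>+x. C * (\<integral>\<^sup>+y. F (x, y) \<partial>?M) \<partial>?M)"
    by (intro nn_integral_mono pointwise)
  also have "\<dots> = C * (\<integral>\<^sup>+y. (\<integral>\<^sup>+x. F (x, y) \<partial>?M) \<partial>?M)"
    using F_meas by (simp add: nn_integral_cmult Fubini M1.borel_measurable_nn_integral_fst)
  also have "(\<integral>\<^sup>+y. (\<integral>\<^sup>+x. F (x, y) \<partial>?M) \<partial>?M)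
      = (\<integral>\<^sup>+y. ennreal ((cmod (f y))\<^sup>2) * (\<integral>\<^sup>+x. ennreal ((cmod (g x))\<^sup>2) \<partial>?M) \<partial>?M)"
  proof (intro nn_integral_cong)
    fix y assume y: "y \<in> space ?M"
    have "(\<lambda>x. x - y) \<in> measurable ?M ?M"
      using y by (intro measurable_freq_measure_diff) auto
    then have "(\<lambda>x. g (x - y)) \<in> borel_measurable ?M"
      using measurable_compose[OF _ g] by blast
    then have "(\<lambda>x. ennreal ((cmod (g (x - y)))\<^sup>2)) \<in> borel_measurable ?M"
      by simp
    then show "(\<integral>\<^sup>+x. F (x, y) \<partial>?M) = ennreal ((cmod (f y))\<^sup>2) * (\<integral>\<^sup>+x. ennreal ((cmod (g x))\<^sup>2) \<partial>?M)"
      using nn_integral_freq_measure_translation[OF y, of "\<lambda>x. ennreal ((cmod (g x))\<^sup>2)"] g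
      by (simp add: F_def ennreal_mult nn_integral_cmult)
  qed
  also have "\<dots> = (\<integral>\<^sup>+y. ennreal ((cmod (f y))\<^sup>2) \<partial>?M) * (\<integral>\<^sup>+x. ennreal ((cmod (g x))\<^sup>2) \<partial>?M)"
    using f by (simp add: nn_integral_multc)
  finally show ?thesis by (simp add: mult.assoc)
qed

definition ennreal_sqrt :: "ennreal \<Rightarrow> ennreal" where
  "ennreal_sqrt I = (if I = \<infinity> then \<infinity> else ennreal (sqrt (enn2real I)))"

lemma L2norm_eq_ennreal_sqrt:
  "L2norm torus f = ennreal_sqrt (\<integral>\<^sup>+x. ennreal ((cmod (f x))\<^sup>2) \<partial>freq_measure torus)"
  by (simp add: L2norm_def ennreal_sqrt_def Let_def)

lemma ennreal_sqrt_le_mult: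
  fixes c :: real
  assumes c: "c > 0" and I: "I \<le> ennreal (c\<^sup>2) * I1 * I2"
  shows "ennreal_sqrt I \<le> ennreal c * ennreal_sqrt I1 * ennreal_sqrt I2"
proof (cases "I1 = \<infinity> \<or> I2 = \<infinity>")
  case True
  show ?thesis
  proof (cases "I1 = 0 \<or> I2 = 0")
    case True
    then have "I = 0" using I by auto
    then show ?thesis by (simp add: ennreal_sqrt_def)
  next
    case False
    then have "ennreal c * ennreal_sqrt I1 * ennreal_sqrt I2 = \<infinity>"
      using \<open>I1 = \<infinity> \<or> I2 = \<infinity>\<close> c by (auto simp: ennreal_sqrt_def ennreal_mult_eq_top_iff enn2real_eq_0_iff)
    then show ?thesis by simp
  qed
next
  case False
  then obtain i1 i2 where i: "I1 = ennreal i1" "I2 = ennreal i2" "i1 \<ge> 0" "i2 \<ge> 0"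
    by (cases I1; cases I2) auto
  have le: "I \<le> ennreal (c\<^sup>2 * i1 * i2)" using I i c by (simp add: ennreal_mult)
  then obtain r where r: "I = ennreal r" "r \<ge> 0"
    by (cases I) (auto simp: top_unique)
  have "sqrt r \<le> sqrt (c\<^sup>2 * i1 * i2)" using le r i by (simp add: ennreal_le_iff)
  also have "\<dots> = c * sqrt i1 * sqrt i2" using c i by (simp add: real_sqrt_mult)
  finally show ?thesis using r i c by (simp add: ennreal_sqrt_def ennreal_mult[symmetric])
qed

section \<open>Measure of the fibre\<close>

lemma covered_by_two_intervals:
  fixes q D :: "real \<Rightarrow> real" and T :: "real set"
  assumes secant: "\<And>u v. q v - q u = (v - u) * (D u + D v) / 2"
    and s: "s > 0" and D: "\<And>u. u \<in> T \<Longrightarrow> s \<le> \<bar>D u\<bar>"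
    and osc: "\<And>u v. u \<in> T \<Longrightarrow> v \<in> T \<Longrightarrow> \<bar>q v - q u\<bar> \<le> M"
  obtains a b where "T \<subseteq> {a - M / s..a + M / s} \<union> {b - M / s..b + M / s}"
proof -
  have close: "\<bar>v - u\<bar> \<le> M / s"
    if "u \<in> T" "v \<in> T" "(D u \<ge> s \<and> D v \<ge> s) \<or> (D u \<le> - s \<and> D v \<le> - s)" for u v
  proof -
    have "\<bar>v - u\<bar> * (2 * s) / 2 \<le> \<bar>v - u\<bar> * \<bar>D u + D v\<bar> / 2"
      using that(3) by (intro divide_right_mono mult_left_mono) auto
    also have "\<dots> \<le> M"
      using osc[OF that(1,2)] by (simp add: secant abs_mult)
    finally show ?thesis using s by (simp add: field_simps)
  qed
  have cover: "\<exists>a. {u \<in> T. P u} \<subseteq> {a - M / s..a + M / s}"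
    if close_P: "\<And>u v. u \<in> T \<Longrightarrow> v \<in> T \<Longrightarrow> P u \<Longrightarrow> P v \<Longrightarrow> \<bar>v - u\<bar> \<le> M / s" for P
  proof (cases "{u \<in> T. P u} = {}")
    case False
    then obtain a where a: "a \<in> T" "P a" by auto
    have "u \<in> {a - M / s..a + M / s}" if "u \<in> T" "P u" for u
      using close_P[OF a(1) that(1) a(2) that(2)] by (auto simp: abs_le_iff)
    then show ?thesis by blast
  qed blast
  obtain a where a: "{u \<in> T. D u \<ge> s} \<subseteq> {a - M / s..a + M / s}"
    using cover[of "\<lambda>u. D u \<ge> s"] close by blast
  obtain b where b: "{u \<in> T. D u \<le> - s} \<subseteq> {b - M / s..b + M / s}"
    using cover[of "\<lambda>u. D u \<le> - s"] close by blast
  have "T \<subseteq> {u \<in> T. D u \<ge> s} \<union> {u \<in> T. D u \<le> - s}"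
    using D by fastforce
  with a b show ?thesis using that by blast
qed

lemma card_Ints_interval_le:
  fixes a d :: real
  assumes "d \<ge> 0"
  shows "finite ({a - d..a + d} \<inter> \<int>)" "real (card ({a - d..a + d} \<inter> \<int>)) \<le> 2 * d + 1"
proof -
  have sub: "{a - d..a + d} \<inter> \<int> \<subseteq> real_of_int ` {\<lceil>a - d\<rceil>..\<lfloor>a + d\<rfloor>}"
    by (auto elim!: Ints_cases simp: ceiling_le_iff le_floor_iff)
  then show "finite ({a - d..a + d} \<inter> \<int>)" by (rule finite_subset) simp
  then have "card ({a - d..a + d} \<inter> \<int>) \<le> card {\<lceil>a - d\<rceil>..\<lfloor>a + d\<rfloor>}"
    using card_mono[OF _ sub] card_image_le[of "{\<lceil>a - d\<rceil>..\<lfloor>a + d\<rfloor>}" real_of_int] by simp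
  moreover have "real (card {\<lceil>a - d\<rceil>..\<lfloor>a + d\<rfloor>}) \<le> 2 * d + 1"
    using assms ceiling_correct[of "a - d"] floor_correct[of "a + d"] by simp linarith
  ultimately show "real (card ({a - d..a + d} \<inter> \<int>)) \<le> 2 * d + 1" by linarith
qed

definition eta_interval_bound :: "bool \<Rightarrow> real \<Rightarrow> real" where
  "eta_interval_bound torus d = (if torus then 2 * d + 1 else 2 * d)"

lemma nn_integral_eta_measure_interval_le:
  fixes a d :: real
  assumes "d \<ge> 0"
  shows "(\<integral>\<^sup>+\<eta>. indicator {a - d..a + d} \<eta> \<partial>eta_measure torus) \<le> ennreal (eta_interval_bound torus d)"
proof (cases torus)
  case True
  have "(\<integral>\<^sup>+\<eta>. indicator {a - d..a + d} \<eta> \<partial>eta_measure torus)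
      = (\<integral>\<^sup>+\<eta>. indicator ({a - d..a + d} \<inter> \<int>) \<eta> \<partial>count_space \<int>)"
    unfolding eta_measure_def using True
    by (simp only: if_True) (intro nn_integral_cong, auto split: split_indicator)
  also have "\<dots> = emeasure (count_space \<int>) ({a - d..a + d} \<inter> \<int>)"
    by (rule nn_integral_indicator) simp
  also have "\<dots> = ennreal (real (card ({a - d..a + d} \<inter> \<int>)))"
    using card_Ints_interval_le(1)[OF assms]
    by (simp add: emeasure_count_space_finite ennreal_of_nat_eq_real_of_nat)
  also have "\<dots> \<le> ennreal (eta_interval_bound torus d)"
    using True card_Ints_interval_le(2)[OF assms] by (simp add: eta_interval_bound_def ennreal_leI)
  finally show ?thesis .
qed (use assms in \<open>simp add: eta_measure_def eta_interval_bound_def\<close>)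

lemma nn_integral_eta_measure_two_intervals_le:
  fixes a b d :: real
  assumes "T \<subseteq> {a - d..a + d} \<union> {b - d..b + d}" "d \<ge> 0"
  shows "(\<integral>\<^sup>+\<eta>. indicator T \<eta> \<partial>eta_measure torus) \<le> ennreal (2 * eta_interval_bound torus d)"
proof -
  have "(\<integral>\<^sup>+\<eta>. indicator T \<eta> \<partial>eta_measure torus)
      \<le> (\<integral>\<^sup>+\<eta>. indicator {a - d..a + d} \<eta> + indicator {b - d..b + d} \<eta> \<partial>eta_measure torus)"
    using assms(1) by (intro nn_integral_mono) (auto split: split_indicator)
  also have "\<dots> = (\<integral>\<^sup>+\<eta>. indicator {a - d..a + d} \<eta> \<partial>eta_measure torus)
      + (\<integral>\<^sup>+\<eta>. indicator {b - d..b + d} \<eta> \<partial>eta_measure torus)"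
    by (rule nn_integral_add)
      (auto intro!: measurable_eta_measure_imp_borel measurable_ident_sets simp: eta_measure_def)
  also have "\<dots> \<le> ennreal (eta_interval_bound torus d) + ennreal (eta_interval_bound torus d)"
    using assms(2) by (intro add_mono nn_integral_eta_measure_interval_le)
  also have "\<dots> = ennreal (2 * eta_interval_bound torus d)"
    using assms(2) by (simp add: eta_interval_bound_def ennreal_plus[symmetric] del: ennreal_plus)
  finally show ?thesis .
qed

text \<open>\<open>Dset False\<close> omits the integrality constraint on \<open>\<eta>\<close>, so the fibre is the same set on
  \<open>\<real>\<^sup>2\<close> and on \<open>\<real> \<times> \<int>\<close>.\<close>
definition fibre :: "real \<Rightarrow> real \<Rightarrow> real \<Rightarrow> real \<Rightarrow> real \<Rightarrow> real \<times> real \<times> real \<Rightarrow> (real \<times> real \<times> real) set"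
  where "fibre \<alpha> N1 L1 N2 L2 x = {y. y \<in> Dset False \<alpha> N1 L1 \<and> x - y \<in> Dset False \<alpha> N2 L2}"

definition fibre_base :: "real \<Rightarrow> real \<Rightarrow> real \<Rightarrow> real \<Rightarrow> real \<Rightarrow> real \<Rightarrow> real \<Rightarrow> (real \<times> real) set"
  where "fibre_base \<alpha> N1 N2 L \<tau> \<xi> \<eta> = {(\<xi>1, \<eta>1). \<xi>1 \<in> annulus N1 \<and> \<xi> - \<xi>1 \<in> annulus N2 \<and>
    \<bar>\<tau> - omega \<alpha> \<xi>1 \<eta>1 - omega \<alpha> (\<xi> - \<xi>1) (\<eta> - \<eta>1)\<bar> \<le> L}"

lemma Dset_subset_Dset_False: "Dset torus \<alpha> N L \<subseteq> Dset False \<alpha> N L"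
  by (auto simp: Dset_def)

lemma mem_fibre_iff:
  "(t, \<xi>1, \<eta>1) \<in> fibre \<alpha> N1 L1 N2 L2 (\<tau>, \<xi>, \<eta>) \<longleftrightarrow>
    \<xi>1 \<in> annulus N1 \<and> \<xi> - \<xi>1 \<in> annulus N2 \<and>
    \<bar>t - omega \<alpha> \<xi>1 \<eta>1\<bar> \<le> L1 \<and> \<bar>\<tau> - t - omega \<alpha> (\<xi> - \<xi>1) (\<eta> - \<eta>1)\<bar> \<le> L2"
  by (auto simp: fibre_def Dset_def)

lemma borel_measurable_indicator_Dset:
  "(\<lambda>y. indicator (Dset False \<alpha> N L) y :: ennreal) \<in> borel_measurable (freq_measure torus)"
proof -
  have eq: "Dset False \<alpha> N L
      = {y. fst (snd y) \<in> annulus N \<and> \<bar>fst y - omega \<alpha> (fst (snd y)) (snd (snd y))\<bar> \<le> L}"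
    by (auto simp: Dset_def)
  show ?thesis unfolding eq annulus_def by measurable
qed

lemma borel_measurable_indicator_fibre:
  assumes "x \<in> space (freq_measure torus)"
  shows "(\<lambda>y. indicator (fibre \<alpha> N1 L1 N2 L2 x) y :: ennreal) \<in> borel_measurable (freq_measure torus)"
proof -
  have "(\<lambda>y. x - y) \<in> measurable (freq_measure torus) (freq_measure torus)"
    using assms by (intro measurable_freq_measure_diff) auto
  then have "(\<lambda>y. indicator (Dset False \<alpha> N2 L2) (x - y) :: ennreal) \<in> borel_measurable (freq_measure torus)"
    using measurable_compose[OF _ borel_measurable_indicator_Dset] by blast
  with borel_measurable_indicator_Dset show ?thesis
    by (simp add: fibre_def indicator_def of_bool_conj)
qed

lemma nn_integral_fibre_tau_le:
  assumes "L1 \<ge> 0" "L2 \<ge> 0"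
  shows "(\<integral>\<^sup>+t. indicator (fibre \<alpha> N1 L1 N2 L2 (\<tau>, \<xi>, \<eta>)) (t, \<xi>1, \<eta>1) \<partial>lborel)
    \<le> ennreal (2 * min L1 L2) * indicator (fibre_base \<alpha> N1 N2 (L1 + L2) \<tau> \<xi> \<eta>) (\<xi>1, \<eta>1)"
proof (cases "(\<xi>1, \<eta>1) \<in> fibre_base \<alpha> N1 N2 (L1 + L2) \<tau> \<xi> \<eta>")
  case False
  then have "(t, \<xi>1, \<eta>1) \<notin> fibre \<alpha> N1 L1 N2 L2 (\<tau>, \<xi>, \<eta>)" for t
    by (auto simp: mem_fibre_iff fibre_base_def)
  then show ?thesis by simp
next
  case True
  let ?I = "\<lambda>t. indicator (fibre \<alpha> N1 L1 N2 L2 (\<tau>, \<xi>, \<eta>)) (t, \<xi>1, \<eta>1) :: ennreal"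
  let ?\<omega>1 = "omega \<alpha> \<xi>1 \<eta>1" and ?\<omega>2 = "omega \<alpha> (\<xi> - \<xi>1) (\<eta> - \<eta>1)"
  have "(\<integral>\<^sup>+t. ?I t \<partial>lborel) \<le> (\<integral>\<^sup>+t. indicator {?\<omega>1 - L1..?\<omega>1 + L1} t \<partial>lborel)"
    by (intro nn_integral_mono) (auto simp: mem_fibre_iff split: split_indicator)
  also have "\<dots> = ennreal (2 * L1)" using assms by simp
  finally have L1: "(\<integral>\<^sup>+t. ?I t \<partial>lborel) \<le> ennreal (2 * L1)" .
  have "(\<integral>\<^sup>+t. ?I t \<partial>lborel) \<le> (\<integral>\<^sup>+t. indicator {\<tau> - ?\<omega>2 - L2..\<tau> - ?\<omega>2 + L2} t \<partial>lborel)"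
    by (intro nn_integral_mono) (auto simp: mem_fibre_iff split: split_indicator)
  also have "\<dots> = ennreal (2 * L2)" using assms by simp
  finally have L2: "(\<integral>\<^sup>+t. ?I t \<partial>lborel) \<le> ennreal (2 * L2)" .
  show ?thesis
    using L1 L2 True by (simp add: min_def)
qed

lemma nn_integral_xi_annuli_le:
  assumes "N1 > 0" "N2 > 0"
  shows "(\<integral>\<^sup>+\<xi>1. indicator {\<xi>1. \<xi>1 \<in> annulus N1 \<and> \<xi> - \<xi>1 \<in> annulus N2} \<xi>1 \<partial>lborel)
    \<le> ennreal (8 * min N1 N2)"
proof -
  let ?A = "{\<xi>1. \<xi>1 \<in> annulus N1 \<and> \<xi> - \<xi>1 \<in> annulus N2}"
  have "(\<integral>\<^sup>+\<xi>1. indicator ?A \<xi>1 \<partial>lborel) \<le> (\<integral>\<^sup>+\<xi>1. indicator {- 4 * N1..4 * N1} \<xi>1 \<partial>lborel)"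
    by (intro nn_integral_mono) (auto simp: annulus_def split: split_indicator)
  also have "\<dots> = ennreal (8 * N1)" using assms by simp
  finally have N1: "(\<integral>\<^sup>+\<xi>1. indicator ?A \<xi>1 \<partial>lborel) \<le> ennreal (8 * N1)" .
  have "(\<integral>\<^sup>+\<xi>1. indicator ?A \<xi>1 \<partial>lborel) \<le> (\<integral>\<^sup>+\<xi>1. indicator {\<xi> - 4 * N2..\<xi> + 4 * N2} \<xi>1 \<partial>lborel)"
    by (intro nn_integral_mono) (auto simp: annulus_def split: split_indicator)
  also have "\<dots> = ennreal (8 * N2)" using assms by simp
  finally have N2: "(\<integral>\<^sup>+\<xi>1. indicator ?A \<xi>1 \<partial>lborel) \<le> ennreal (8 * N2)" .
  show ?thesis
    using N1 N2 by (simp add: min_def)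
qed

text \<open>For fixed \<open>\<xi>\<^sub>1\<close> the phase \<open>\<eta>\<^sub>1 \<mapsto> \<omega>(\<xi>\<^sub>1, \<eta>\<^sub>1) + \<omega>(\<xi> - \<xi>\<^sub>1, \<eta> - \<eta>\<^sub>1)\<close> is a quadratic
  polynomial whose derivative is the transversality expression; where that derivative is at
  least \<open>s\<close> in modulus, a sublevel strip of width \<open>2 L\<close> meets at most two intervals of
  radius \<open>2 L / s\<close>.\<close>
lemma nn_integral_fibre_base_eta_le:
  fixes s L :: real
  assumes s: "s > 0" and L: "L \<ge> 0" and N: "N1 > 0" "N2 > 0"
    and transversal: "\<And>\<eta>1. (\<xi>1, \<eta>1) \<in> fibre_base \<alpha> N1 N2 L \<tau> \<xi> \<eta> \<Longrightarrow>
      s \<le> \<bar>2 * \<eta>1 / \<xi>1 - 2 * (\<eta> - \<eta>1) / (\<xi> - \<xi>1)\<bar>"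
  shows "(\<integral>\<^sup>+\<eta>1. indicator (fibre_base \<alpha> N1 N2 L \<tau> \<xi> \<eta>) (\<xi>1, \<eta>1) \<partial>eta_measure torus)
    \<le> ennreal (2 * eta_interval_bound torus (2 * L / s))
      * indicator {\<xi>1. \<xi>1 \<in> annulus N1 \<and> \<xi> - \<xi>1 \<in> annulus N2} \<xi>1"
proof (cases "\<xi>1 \<in> annulus N1 \<and> \<xi> - \<xi>1 \<in> annulus N2")
  case False
  then have "indicator (fibre_base \<alpha> N1 N2 L \<tau> \<xi> \<eta>) (\<xi>1, \<eta>1) = (0 :: ennreal)" for \<eta>1
    by (auto simp: fibre_base_def)
  then show ?thesis by simp
next
  case True
  define \<xi>2 where "\<xi>2 = \<xi> - \<xi>1"
  have nz: "\<xi>1 \<noteq> 0" "\<xi>2 \<noteq> 0"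
    using True N by (auto simp: annulus_def \<xi>2_def)
  define q where "q = (\<lambda>e. omega \<alpha> \<xi>1 e + omega \<alpha> \<xi>2 (\<eta> - e))"
  define D where "D = (\<lambda>e. 2 * e / \<xi>1 - 2 * (\<eta> - e) / \<xi>2)"
  define T where "T = {e. \<bar>\<tau> - q e\<bar> \<le> L}"
  have T: "(\<xi>1, e) \<in> fibre_base \<alpha> N1 N2 L \<tau> \<xi> \<eta> \<longleftrightarrow> e \<in> T" for e
    using True by (simp add: fibre_base_def T_def q_def \<xi>2_def diff_diff_eq)
  have "q v - q u = (v - u) * (D u + D v) / 2" for u v
    using nz by (simp add: q_def D_def omega_eq_signed_powr field_simps power2_eq_square)
  moreover have "s \<le> \<bar>D u\<bar>" if "u \<in> T" for u
    using transversal T that by (simp add: D_def \<xi>2_def)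
  moreover have "\<bar>q v - q u\<bar> \<le> 2 * L" if "u \<in> T" "v \<in> T" for u v
    using that by (simp add: T_def)
  ultimately obtain a b where "T \<subseteq> {a - 2 * L / s..a + 2 * L / s} \<union> {b - 2 * L / s..b + 2 * L / s}"
    using covered_by_two_intervals[OF _ s] by metis
  then have "(\<integral>\<^sup>+\<eta>1. indicator T \<eta>1 \<partial>eta_measure torus) \<le> ennreal (2 * eta_interval_bound torus (2 * L / s))"
    by (rule nn_integral_eta_measure_two_intervals_le) (use s L in simp)
  moreover have "indicator (fibre_base \<alpha> N1 N2 L \<tau> \<xi> \<eta>) (\<xi>1, e) = (indicator T e :: ennreal)" for e
    using T by (simp add: indicator_def)
  ultimately show ?thesis using True by simp
qed

lemma borel_measurable_indicator_fibre_base: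
  "(\<lambda>z. indicator (fibre_base \<alpha> N1 N2 L \<tau> \<xi> \<eta>) z :: ennreal) \<in> borel_measurable (lborel \<Otimes>\<^sub>M eta_measure torus)"
proof -
  have [measurable]: "fst \<in> borel_measurable (lborel \<Otimes>\<^sub>M eta_measure torus)"
    "snd \<in> borel_measurable (lborel \<Otimes>\<^sub>M eta_measure torus)"
    by (auto intro: measurable_eta_measure_imp_borel)
  have eq: "fibre_base \<alpha> N1 N2 L \<tau> \<xi> \<eta> = {z. fst z \<in> annulus N1 \<and> \<xi> - fst z \<in> annulus N2 \<and>
      \<bar>\<tau> - omega \<alpha> (fst z) (snd z) - omega \<alpha> (\<xi> - fst z) (\<eta> - snd z)\<bar> \<le> L}"
    by (auto simp: fibre_base_def)
  show ?thesis unfolding eq annulus_def by measurable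
qed

lemma nn_integral_fibre_le:
  fixes s :: real
  assumes x: "(\<tau>, \<xi>, \<eta>) \<in> space (freq_measure torus)"
    and s: "s > 0" and L: "L1 \<ge> 0" "L2 \<ge> 0" and N: "N1 > 0" "N2 > 0"
    and transversal: "\<And>\<xi>1 \<eta>1. (\<xi>1, \<eta>1) \<in> fibre_base \<alpha> N1 N2 (L1 + L2) \<tau> \<xi> \<eta> \<Longrightarrow>
      s \<le> \<bar>2 * \<eta>1 / \<xi>1 - 2 * (\<eta> - \<eta>1) / (\<xi> - \<xi>1)\<bar>"
  shows "(\<integral>\<^sup>+y. indicator (fibre \<alpha> N1 L1 N2 L2 (\<tau>, \<xi>, \<eta>)) y \<partial>freq_measure torus)
    \<le> ennreal (2 * min L1 L2 * (8 * min N1 N2) * (2 * eta_interval_bound torus (2 * (L1 + L2) / s)))"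
proof -
  let ?Z = "lborel \<Otimes>\<^sub>M eta_measure torus"
  let ?E = "fibre \<alpha> N1 L1 N2 L2 (\<tau>, \<xi>, \<eta>)"
  let ?F = "fibre_base \<alpha> N1 N2 (L1 + L2) \<tau> \<xi> \<eta>"
  let ?A = "{\<xi>1. \<xi>1 \<in> annulus N1 \<and> \<xi> - \<xi>1 \<in> annulus N2}"
  define B where "B = 2 * eta_interval_bound torus (2 * (L1 + L2) / s)"
  have B: "B \<ge> 0" using s L by (simp add: B_def eta_interval_bound_def)
  interpret Z: sigma_finite_measure ?Z
    by (intro sigma_finite_pair_measure lborel.sigma_finite_measure_axioms sigma_finite_eta_measure)
  interpret pair_sigma_finite lborel ?Z
    by (simp add: pair_sigma_finite_def lborel.sigma_finite_measure_axioms Z.sigma_finite_measure_axioms)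
  interpret \<eta>: sigma_finite_measure "eta_measure torus"
    by (rule sigma_finite_eta_measure)
  have "(\<integral>\<^sup>+y. indicator ?E y \<partial>freq_measure torus) = (\<integral>\<^sup>+z. (\<integral>\<^sup>+t. indicator ?E (t, z) \<partial>lborel) \<partial>?Z)"
    using nn_integral_snd[of "indicator ?E"] borel_measurable_indicator_fibre[OF x]
    by (simp add: freq_measure_def)
  also have "\<dots> \<le> (\<integral>\<^sup>+z. ennreal (2 * min L1 L2) * indicator ?F z \<partial>?Z)"
    by (intro nn_integral_mono) (auto intro: order_trans[OF nn_integral_fibre_tau_le[OF L]])
  also have "\<dots> = ennreal (2 * min L1 L2) * (\<integral>\<^sup>+\<xi>1. (\<integral>\<^sup>+\<eta>1. indicator ?F (\<xi>1, \<eta>1) \<partial>eta_measure torus) \<partial>lborel)"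
    using borel_measurable_indicator_fibre_base \<eta>.nn_integral_fst[OF borel_measurable_indicator_fibre_base]
    by (simp add: nn_integral_cmult)
  also have "\<dots> \<le> ennreal (2 * min L1 L2) * (ennreal B * ennreal (8 * min N1 N2))"
  proof (rule mult_left_mono)
    have "(\<integral>\<^sup>+\<xi>1. (\<integral>\<^sup>+\<eta>1. indicator ?F (\<xi>1, \<eta>1) \<partial>eta_measure torus) \<partial>lborel)
        \<le> (\<integral>\<^sup>+\<xi>1. ennreal B * indicator ?A \<xi>1 \<partial>lborel)"
      unfolding B_def using s L N transversal by (intro nn_integral_mono nn_integral_fibre_base_eta_le) auto
    also have "\<dots> \<le> ennreal B * ennreal (8 * min N1 N2)"
      using nn_integral_xi_annuli_le[OF N, of \<xi>] by (simp add: nn_integral_cmult annulus_def mult_left_mono)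
    finally show "(\<integral>\<^sup>+\<xi>1. (\<integral>\<^sup>+\<eta>1. indicator ?F (\<xi>1, \<eta>1) \<partial>eta_measure torus) \<partial>lborel)
        \<le> ennreal B * ennreal (8 * min N1 N2)" .
  qed simp
  also have "\<dots> = ennreal (2 * min L1 L2 * (8 * min N1 N2) * B)"
    using B L N by (simp add: ennreal_mult[symmetric] mult_ac)
  finally show ?thesis by (simp add: B_def)
qed

section \<open>The bilinear estimate\<close>

definition fibre_const :: "real \<Rightarrow> real \<Rightarrow> real" where
  "fibre_const K \<alpha> = 2 * (16 * K powr (\<alpha> / 2) / transversality_const K \<alpha> + 2)"

lemma fibre_const_pos: "K \<ge> 1 \<Longrightarrow> fibre_const K \<alpha> > 0"
  using transversality_const_pos[of K \<alpha>] by (simp add: fibre_const_def add_pos_nonneg)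

lemma eta_interval_bound_le_C1:
  fixes \<alpha> K N1 N2 L1 L2 :: real
  assumes "\<alpha> \<ge> 0" "K \<ge> 1" "N1 > 0" "N2 > 0" "N2 \<le> K * N1" "L1 \<ge> 0" "L2 \<ge> 0"
  shows "2 * eta_interval_bound torus (2 * (L1 + L2) / (transversality_const K \<alpha> * N1 powr (\<alpha> / 2)))
    \<le> fibre_const K \<alpha> * (C1 torus \<alpha> (max L1 L2) (max N1 N2))\<^sup>2"
proof -
  define \<kappa> where "\<kappa> = transversality_const K \<alpha>"
  define r where "r = max L1 L2 / max N1 N2 powr (\<alpha> / 2)"
  define k where "k = 4 * K powr (\<alpha> / 2) / \<kappa>"
  have \<kappa>: "\<kappa> > 0" using assms(2) by (simp add: \<kappa>_def transversality_const_pos)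
  have r: "r \<ge> 0" using assms by (simp add: r_def)
  have k: "k \<ge> 0" using \<kappa> by (simp add: k_def)
  have "max N1 N2 powr (\<alpha> / 2) \<le> (K * N1) powr (\<alpha> / 2)"
    using assms by (intro powr_mono2) auto
  also have "\<dots> = K powr (\<alpha> / 2) * N1 powr (\<alpha> / 2)"
    using assms by (simp add: powr_mult)
  finally have N: "max N1 N2 powr (\<alpha> / 2) \<le> K powr (\<alpha> / 2) * N1 powr (\<alpha> / 2)" .
  define d where "d = 2 * (L1 + L2) / (\<kappa> * N1 powr (\<alpha> / 2))"
  have "d \<le> 4 * max L1 L2 / (\<kappa> * N1 powr (\<alpha> / 2))"
    unfolding d_def using assms \<kappa> by (intro divide_right_mono) auto
  also have "\<dots> = 4 * max L1 L2 * K powr (\<alpha> / 2) / (\<kappa> * (K powr (\<alpha> / 2) * N1 powr (\<alpha> / 2)))"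
    using assms by simp
  also have "\<dots> \<le> 4 * max L1 L2 * K powr (\<alpha> / 2) / (\<kappa> * max N1 N2 powr (\<alpha> / 2))"
    using N \<kappa> assms by (intro divide_left_mono mult_left_mono mult_pos_pos) auto
  also have "\<dots> = k * r" by (simp add: k_def r_def)
  finally have d: "d \<le> k * r" .
  have const: "fibre_const K \<alpha> = 2 * (4 * k + 2)"
    by (simp add: fibre_const_def k_def \<kappa>_def)
  show ?thesis
  proof (cases torus)
    case False
    have "(C1 torus \<alpha> (max L1 L2) (max N1 N2))\<^sup>2 = r"
      using False r by (simp add: C1_def r_def)
    moreover have "2 * (2 * d) \<le> 2 * (4 * k + 2) * r"
      using d r mult_nonneg_nonneg[OF k r] by (simp add: algebra_simps)
    ultimately show ?thesis
      using False by (simp add: eta_interval_bound_def const \<kappa>_def d_def)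
  next
    case True
    define j where "j = sqrt (1 + r\<^sup>2)"
    have j: "1 \<le> j" "r \<le> j" unfolding j_def using r by (auto intro: real_le_rsqrt)
    have "(C1 torus \<alpha> (max L1 L2) (max N1 N2))\<^sup>2 = j"
      using True by (simp add: C1_def japanese_def j_def r_def)
    moreover have "2 * (2 * d + 1) \<le> 2 * (4 * k + 2) * j"
    proof -
      have "2 * (2 * d + 1) \<le> (4 * k + 2) * (r + 1)"
        using d r k by (simp add: algebra_simps)
      also have "\<dots> \<le> (4 * k + 2) * (2 * j)"
        using j k by (intro mult_left_mono) auto
      finally show ?thesis by (simp add: algebra_simps)
    qed
    ultimately show ?thesis
      using True by (simp add: eta_interval_bound_def const \<kappa>_def d_def)
  qed
qed

lemma nn_integral_fibre_le_C1:
  fixes \<alpha> K N1 N2 N3 L1 L2 L3 :: real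
  assumes \<alpha>: "\<alpha> \<ge> 1" and K: "K \<ge> 1" and N: "N1 > 0" "N2 > 0" "N3 > 0" "N1 \<le> K * N3" "N2 \<le> K * N1"
    and L: "L1 \<ge> 0" "L2 \<ge> 0"
    and small: "L1 + L2 + L3 \<le> resonance_const K \<alpha> / 2 * N1 powr \<alpha> * N2"
    and x: "x \<in> Dset torus \<alpha> N3 L3"
  shows "(\<integral>\<^sup>+y. indicator (fibre \<alpha> N1 L1 N2 L2 x) y \<partial>freq_measure torus)
    \<le> ennreal (16 * fibre_const K \<alpha> * min L1 L2 * min N1 N2 * (C1 torus \<alpha> (max L1 L2) (max N1 N2))\<^sup>2)"
proof -
  obtain \<tau> \<xi> \<eta> where x_eq: "x = (\<tau>, \<xi>, \<eta>)" by (cases x)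
  have x3: "\<xi> \<in> annulus N3" "\<bar>\<tau> - omega \<alpha> \<xi> \<eta>\<bar> \<le> L3"
    using x by (auto simp: Dset_def x_eq)
  define s where "s = transversality_const K \<alpha> * N1 powr (\<alpha> / 2)"
  have s: "s > 0" using transversality_const_pos[OF K] N by (simp add: s_def)
  have transversal: "s \<le> \<bar>2 * \<eta>1 / \<xi>1 - 2 * (\<eta> - \<eta>1) / (\<xi> - \<xi>1)\<bar>"
    if "(\<xi>1, \<eta>1) \<in> fibre_base \<alpha> N1 N2 (L1 + L2) \<tau> \<xi> \<eta>" for \<xi>1 \<eta>1
    unfolding s_def
  proof (rule transversality_lower_bound[OF \<alpha> K N])
    show "\<xi>1 \<in> annulus N1" "\<xi> - \<xi>1 \<in> annulus N2" "\<xi>1 + (\<xi> - \<xi>1) \<in> annulus N3"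
      using that x3 by (auto simp: fibre_base_def)
    show "\<bar>omega \<alpha> \<xi>1 \<eta>1 + omega \<alpha> (\<xi> - \<xi>1) (\<eta> - \<eta>1) - omega \<alpha> (\<xi>1 + (\<xi> - \<xi>1)) (\<eta>1 + (\<eta> - \<eta>1))\<bar>
        \<le> resonance_const K \<alpha> / 2 * N1 powr \<alpha> * N2"
    proof -
      have "\<bar>omega \<alpha> \<xi>1 \<eta>1 + omega \<alpha> (\<xi> - \<xi>1) (\<eta> - \<eta>1) - omega \<alpha> \<xi> \<eta>\<bar> \<le> L1 + L2 + L3"
        using that x3(2) by (auto simp: fibre_base_def abs_le_iff)
      then show ?thesis using small by simp
    qed
  qed
  have "(\<tau>, \<xi>, \<eta>) \<in> space (freq_measure torus)"
    using x Dset_subset_space[of torus \<alpha> N3 L3] unfolding x_eq by blast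
  from nn_integral_fibre_le[OF this s L N(1,2) transversal]
  have "(\<integral>\<^sup>+y. indicator (fibre \<alpha> N1 L1 N2 L2 x) y \<partial>freq_measure torus)
      \<le> ennreal (2 * min L1 L2 * (8 * min N1 N2) * (2 * eta_interval_bound torus (2 * (L1 + L2) / s)))"
    by (simp add: x_eq)
  also have "\<dots> \<le> ennreal (2 * min L1 L2 * (8 * min N1 N2) * (fibre_const K \<alpha> * (C1 torus \<alpha> (max L1 L2) (max N1 N2))\<^sup>2))"
    unfolding s_def using \<alpha> K N L
    by (intro ennreal_leI mult_left_mono eta_interval_bound_le_C1) auto
  finally show ?thesis by (simp add: mult_ac)
qed

lemma bilinear_estimate:
  fixes \<alpha> K N1 N2 N3 L1 L2 L3 :: real and f1 f2 :: "real \<times> real \<times> real \<Rightarrow> complex"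
  assumes \<alpha>: "\<alpha> \<ge> 1" and K: "K \<ge> 1"
    and N: "N1 > 0" "N2 > 0" "N3 > 0" "N1 \<le> K * N3" "N2 \<le> K * N1"
    and L: "L1 > 0" "L2 > 0"
    and small: "L1 + L2 + L3 \<le> resonance_const K \<alpha> / 2 * N1 powr \<alpha> * N2"
    and f1: "f1 \<in> borel_measurable (freq_measure torus)" "\<And>x. f1 x \<noteq> 0 \<Longrightarrow> x \<in> Dset torus \<alpha> N1 L1"
    and f2: "f2 \<in> borel_measurable (freq_measure torus)" "\<And>x. f2 x \<noteq> 0 \<Longrightarrow> x \<in> Dset torus \<alpha> N2 L2"
  shows "L2norm torus (\<lambda>x. indicator (Dset torus \<alpha> N3 L3) x * conv torus f1 f2 x)
    \<le> ennreal (4 * sqrt (fibre_const K \<alpha>) * sqrt (min L1 L2) * sqrt (min N1 N2)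
        * C1 torus \<alpha> (max L1 L2) (max N1 N2)) * L2norm torus f1 * L2norm torus f2"
proof -
  define c where "c = 4 * sqrt (fibre_const K \<alpha>) * sqrt (min L1 L2) * sqrt (min N1 N2)
    * C1 torus \<alpha> (max L1 L2) (max N1 N2)"
  have C1: "C1 torus \<alpha> (max L1 L2) (max N1 N2) > 0"
    using L N by (simp add: C1_def japanese_def add_pos_nonneg)
  have c: "c > 0"
    using fibre_const_pos[OF K] L N C1 by (simp add: c_def)
  have c_sq: "c\<^sup>2 = 16 * fibre_const K \<alpha> * min L1 L2 * min N1 N2 * (C1 torus \<alpha> (max L1 L2) (max N1 N2))\<^sup>2"
    using less_imp_le[OF fibre_const_pos[OF K]] L N by (simp add: c_def power_mult_distrib)
  have "(\<integral>\<^sup>+x. ennreal ((cmod (indicator (Dset torus \<alpha> N3 L3) x * conv torus f1 f2 x))\<^sup>2) \<partial>freq_measure torus)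
      \<le> ennreal (c\<^sup>2) * (\<integral>\<^sup>+x. ennreal ((cmod (f1 x))\<^sup>2) \<partial>freq_measure torus)
        * (\<integral>\<^sup>+x. ennreal ((cmod (f2 x))\<^sup>2) \<partial>freq_measure torus)"
  proof (rule nn_integral_indicator_conv_sq_le[OF f1(1) f2(1)])
    fix x assume x: "x \<in> Dset torus \<alpha> N3 L3"
    show "(\<lambda>y. indicator (fibre \<alpha> N1 L1 N2 L2 x) y :: ennreal) \<in> borel_measurable (freq_measure torus)"
      using x Dset_subset_space by (blast intro: borel_measurable_indicator_fibre)
    show "(\<integral>\<^sup>+y. indicator (fibre \<alpha> N1 L1 N2 L2 x) y \<partial>freq_measure torus) \<le> ennreal (c\<^sup>2)"
      unfolding c_sq using \<alpha> K N L small x by (intro nn_integral_fibre_le_C1) auto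
    show "y \<in> fibre \<alpha> N1 L1 N2 L2 x" if "f1 y \<noteq> 0" "f2 (x - y) \<noteq> 0" for y
      using f1(2)[OF that(1)] f2(2)[OF that(2)] Dset_subset_Dset_False unfolding fibre_def by blast
  qed
  then show ?thesis
    unfolding L2norm_eq_ennreal_sqrt c_def[symmetric] by (rule ennreal_sqrt_le_mult[OF c])
qed

theorem corollary4p2:
  "\<forall>\<alpha>::real. \<alpha> \<ge> 2 \<longrightarrow> (\<forall>K::real. K \<ge> 1 \<longrightarrow>
    (\<exists>\<epsilon>>0. \<exists>C>0. \<forall>torus N1 N2 N3 L1 L2 L3 f1 f2.
      dyadic_int N1 \<and> dyadic_int N2 \<and> dyadic_int N3 \<and>
      N1 \<le> K * N3 \<and> N3 \<le> K * N1 \<and> N2 \<le> K * N1 \<and>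
      dyadic_nat L1 \<and> dyadic_nat L2 \<and> dyadic_nat L3 \<and>
      L1 \<le> \<epsilon> * N1 powr \<alpha> * N2 \<and> L2 \<le> \<epsilon> * N1 powr \<alpha> * N2 \<and>
      L3 \<le> \<epsilon> * N1 powr \<alpha> * N2 \<and>
      f1 \<in> borel_measurable (freq_measure torus) \<and>
      f2 \<in> borel_measurable (freq_measure torus) \<and>
      (\<forall>x. f1 x \<noteq> 0 \<longrightarrow> x \<in> Dset torus \<alpha> N1 L1) \<and>
      (\<forall>x. f2 x \<noteq> 0 \<longrightarrow> x \<in> Dset torus \<alpha> N2 L2)
      \<longrightarrow>
      L2norm torus (\<lambda>x. indicator (Dset torus \<alpha> N3 L3) x * conv torus f1 f2 x)
        \<le> ennreal (C * sqrt (min L1 L2) * sqrt (min N1 N2)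
                     * C1 torus \<alpha> (max L1 L2) (max N1 N2))
          * L2norm torus f1 * L2norm torus f2))"
proof (intro allI impI exI conjI)
  fix \<alpha> K :: real
  assume "\<alpha> \<ge> 2" "K \<ge> 1"
  show "resonance_const K \<alpha> / 6 > 0" "4 * sqrt (fibre_const K \<alpha>) > 0"
    using resonance_const_pos[OF \<open>K \<ge> 1\<close>] fibre_const_pos[OF \<open>K \<ge> 1\<close>] by simp_all
qed (intro bilinear_estimate; force simp: dyadic_int_def dyadic_nat_def)

end
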